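(* Let $(\boldsymbol\Sigma,\sigma)$ be a primitive Markov subshift on a countable alphabet with associated set $\mathbb F$, and let $A\in C^0(\boldsymbol\Sigma)$ be bounded above, with summable variations ($\mathrm{Var}(A)<\infty$), and $\inf A|_{\bigcup_{i\in\mathbb F}[i]}>-\infty$. Then there exists a nonnegative, bounded, uniformly continuous function $u_A:\boldsymbol\Sigma\to\mathbb R_+$ with $A+u_A-u_A\circ\sigma\le\beta_A$, which is minimal in the sense that $u_A\le u$ for every nonnegative continuous sub-action $u$ of $A$, and which satisfies $\mathrm{Var}_k(u_A)\le\sum_{j\ge k}\mathrm{Var}_j(A)$ for all $k\ge1$.
   Context: Let $\mathbf M:\mathbb Z_+\times\mathbb Z_+\to\{0,1\}$ be a transition matrix. Put $\mathcal B_0=\{i:\mathbf M(i,j)=1\text{ for some }j\}$, $\mathcal B_n=\{i:\mathbf M(i,j)=1\text{ for some }j\in\mathcal B_{n-1}\}$. $\mathbf M$ is primitive if there exist $\mathbb F\subseteq\mathbb Z_+$ and an integer $K_0\ge0$ such that for all $i,j\in\bigcap_{n\ge0}\mathcal B_n$ there are $\ell_1,\dots,\ell_{K_0}\in\mathbb F$ with $\mathbf M(i,\ell_1)\mathbf M(\ell_1,\ell_2)\cdots\mathbf M(\ell_{K_0},j)=1$. $\boldsymbol\Sigma=\{\mathbf x\in\mathbb Z_+^{\mathbb Z_+}:\mathbf M(x_j,x_{j+1})=1\ \forall j\}$ with metric $d(\mathbf x,\mathbf y)=\lambda^{\min\{j:x_j\neq y_j\}}$, $\lambda\in(0,1)$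 fixed; $\sigma$ the left shift; $[i]=\{\mathbf x:x_0=i\}$. $C^0(\boldsymbol\Sigma)$ = continuous real functions. $\mathcal M_\sigma$ = $\sigma$-invariant Borel probabilities; $\beta_A=\sup_{\mu\in\mathcal M_\sigma}\int A\,d\mu$. $\mathrm{Var}_k(A)=\sup\{A(\mathbf x)-A(\mathbf y):d(\mathbf x,\mathbf y)\le\lambda^k\}$, $\mathrm{Var}(A)=\sum_{k\ge1}\mathrm{Var}_k(A)$. A sub-action for $A$ is a continuous $u$ with $A+u-u\circ\sigma\le\beta_A$ everywhere. *)

theory Defs
  imports "HOL-Probability.Probability"
begin

text \<open>Transition matrix: M i j holds iff the matrix entry M(i,j) equals 1.\<close>

definition Bset :: "(nat \<Rightarrow> nat \<Rightarrow> bool) \<Rightarrow> nat \<Rightarrow> nat set" where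
  "Bset M n = ((\<lambda>S. {i. \<exists>j\<in>S. M i j}) ^^ n) {i. \<exists>j. M i j}"

definition Bcore :: "(nat \<Rightarrow> nat \<Rightarrow> bool) \<Rightarrow> nat set" where
  "Bcore M = (\<Inter>n. Bset M n)"

definition primitive_with :: "(nat \<Rightarrow> nat \<Rightarrow> bool) \<Rightarrow> nat set \<Rightarrow> bool" where
  "primitive_with M F \<longleftrightarrow> (\<exists>K0::nat. \<forall>i\<in>Bcore M. \<forall>j\<in>Bcore M.
     \<exists>p::nat \<Rightarrow> nat. p 0 = i \<and> p (Suc K0) = j \<and> (\<forall>m\<in>{1..K0}. p m \<in> F)
        \<and> (\<forall>m\<le>K0. M (p m) (p (Suc m))))"

definition Sigma_M :: "(nat \<Rightarrow> nat \<Rightarrow> bool) \<Rightarrow> (nat \<Rightarrow> nat) set" where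
  "Sigma_M M = {x. \<forall>j. M (x j) (x (Suc j))}"

definition shift :: "(nat \<Rightarrow> nat) \<Rightarrow> (nat \<Rightarrow> nat)" where
  "shift x = (\<lambda>j. x (Suc j))"

definition dSig :: "real \<Rightarrow> (nat \<Rightarrow> nat) \<Rightarrow> (nat \<Rightarrow> nat) \<Rightarrow> real" where
  "dSig lam x y = (if x = y then 0 else lam ^ (LEAST j. x j \<noteq> y j))"

definition cont_Sig :: "(nat \<Rightarrow> nat \<Rightarrow> bool) \<Rightarrow> real \<Rightarrow> ((nat \<Rightarrow> nat) \<Rightarrow> real) \<Rightarrow> bool" where
  "cont_Sig M lam f \<longleftrightarrow> (\<forall>x\<in>Sigma_M M. \<forall>e>0. \<exists>\<delta>>0. \<forall>y\<in>Sigma_M M.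
      dSig lam x y < \<delta> \<longrightarrow> \<bar>f y - f x\<bar> < e)"

definition ucont_Sig :: "(nat \<Rightarrow> nat \<Rightarrow> bool) \<Rightarrow> real \<Rightarrow> ((nat \<Rightarrow> nat) \<Rightarrow> real) \<Rightarrow> bool" where
  "ucont_Sig M lam f \<longleftrightarrow> (\<forall>e>0. \<exists>\<delta>>0. \<forall>x\<in>Sigma_M M. \<forall>y\<in>Sigma_M M.
      dSig lam x y < \<delta> \<longrightarrow> \<bar>f y - f x\<bar> < e)"

definition open_Sig :: "(nat \<Rightarrow> nat \<Rightarrow> bool) \<Rightarrow> real \<Rightarrow> (nat \<Rightarrow> nat) set \<Rightarrow> bool" where
  "open_Sig M lam U \<longleftrightarrow> U \<subseteq> Sigma_M M \<and>
     (\<forall>x\<in>U. \<exists>e>0. \<forall>y\<in>Sigma_M M. dSig lam x y < e \<longrightarrow> y \<in> U)"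

definition borel_Sig :: "(nat \<Rightarrow> nat \<Rightarrow> bool) \<Rightarrow> real \<Rightarrow> (nat \<Rightarrow> nat) measure" where
  "borel_Sig M lam = sigma (Sigma_M M) {U. open_Sig M lam U}"

definition inv_measures :: "(nat \<Rightarrow> nat \<Rightarrow> bool) \<Rightarrow> real \<Rightarrow> (nat \<Rightarrow> nat) measure set" where
  "inv_measures M lam = {\<mu>. sets \<mu> = sets (borel_Sig M lam) \<and> prob_space \<mu> \<and>
      shift \<in> measurable \<mu> \<mu> \<and>
      (\<forall>B\<in>sets \<mu>. emeasure \<mu> (shift -` B \<inter> space \<mu>) = emeasure \<mu> B)}"

text \<open>Extended-real integral (positive part minus negative part), allowing value -\<infinity>.\<close>
definition eintegral :: "(nat \<Rightarrow> nat) measure \<Rightarrow> ((nat \<Rightarrow> nat) \<Rightarrow> real) \<Rightarrow> ereal" where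
  "eintegral \<mu> f = enn2ereal (\<integral>\<^sup>+ x. ennreal (f x) \<partial>\<mu>) - enn2ereal (\<integral>\<^sup>+ x. ennreal (- f x) \<partial>\<mu>)"

definition beta :: "(nat \<Rightarrow> nat \<Rightarrow> bool) \<Rightarrow> real \<Rightarrow> ((nat \<Rightarrow> nat) \<Rightarrow> real) \<Rightarrow> ereal" where
  "beta M lam A = (SUP \<mu>\<in>inv_measures M lam. eintegral \<mu> A)"

definition Var_k :: "(nat \<Rightarrow> nat \<Rightarrow> bool) \<Rightarrow> real \<Rightarrow> ((nat \<Rightarrow> nat) \<Rightarrow> real) \<Rightarrow> nat \<Rightarrow> ennreal" where
  "Var_k M lam A k = (SUP p\<in>{(x, y). x \<in> Sigma_M M \<and> y \<in> Sigma_M M \<and> dSig lam x y \<le> lam ^ k}.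
      ennreal (A (fst p) - A (snd p)))"

definition Var :: "(nat \<Rightarrow> nat \<Rightarrow> bool) \<Rightarrow> real \<Rightarrow> ((nat \<Rightarrow> nat) \<Rightarrow> real) \<Rightarrow> ennreal" where
  "Var M lam A = (\<Sum>k. Var_k M lam A (Suc k))"

definition sub_action :: "(nat \<Rightarrow> nat \<Rightarrow> bool) \<Rightarrow> real \<Rightarrow> ((nat \<Rightarrow> nat) \<Rightarrow> real) \<Rightarrow> ((nat \<Rightarrow> nat) \<Rightarrow> real) \<Rightarrow> bool" where
  "sub_action M lam A u \<longleftrightarrow> cont_Sig M lam u \<and>
     (\<forall>x\<in>Sigma_M M. ereal (A x + u x - u (shift x)) \<le> beta M lam A)"

end

theory Submission
  imports Defs
begin


text \<open>
  For a real number b, the candidate function is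
    u(x) = sup ({0} \<union> {S_n A y - n b : y \<in> \<Sigma>, n \<ge> 1, \<sigma>^n y = x}),
  where S_n A y is the Birkhoff sum of A along the orbit of y.  With b = \<beta>_A one shows:
  (1) every nonnegative sub-action dominates u, since it dominates each S_n A y - n b;
  (2) u is itself a sub-action, since the excess set of \<sigma> x contains the excess set of x
      shifted by A x - b;
  (3) u has the variation bound Var_k u \<le> \<Sum>_{j\<ge>k} Var_j A, by gluing preimages of x to x'
      and using the distortion estimate for Birkhoff sums; uniform continuity follows.
  All of this requires that the excesses S_n A y - n b are bounded above.  That is where
  primitivity enters: an orbit segment can be closed up into a periodic orbit through F in
  K0 steps; periodic orbits carry invariant measures, so their Birkhoff averages are at most
  \<beta>_A, while A is bounded below on the cylinders over F.
\<close>

lemma shift_funpow: "(shift ^^ n) x = (\<lambda>j. x (j + n))"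
  by (induction n arbitrary: x) (auto simp: shift_def)

lemma shift_Sigma: "x \<in> Sigma_M M \<Longrightarrow> shift x \<in> Sigma_M M"
  by (auto simp: Sigma_M_def shift_def)

lemma shiftn_Sigma: "x \<in> Sigma_M M \<Longrightarrow> (shift ^^ n) x \<in> Sigma_M M"
  by (auto simp: Sigma_M_def shift_funpow)

lemma dSig_le_iff_agree:
  assumes "0 < lam" "lam < 1"
  shows "dSig lam x y \<le> lam ^ m \<longleftrightarrow> (\<forall>i<m. x i = y i)"
proof
  assume d: "dSig lam x y \<le> lam ^ m"
  show "\<forall>i<m. x i = y i"
  proof (intro allI impI)
    fix i assume i: "i < m"
    show "x i = y i"
    proof (rule ccontr)
      assume ne: "x i \<noteq> y i"
      have "(LEAST j. x j \<noteq> y j) \<le> i" using ne by (rule Least_le)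
      hence "lam ^ m < lam ^ (LEAST j. x j \<noteq> y j)"
        using i assms by (intro power_strict_decreasing) auto
      moreover have "x \<noteq> y" using ne by auto
      ultimately show False using d by (simp add: dSig_def)
    qed
  qed
next
  assume ag: "\<forall>i<m. x i = y i"
  show "dSig lam x y \<le> lam ^ m"
  proof (cases "x = y")
    case False
    then obtain j where j: "x j \<noteq> y j" by auto
    have "x (LEAST j. x j \<noteq> y j) \<noteq> y (LEAST j. x j \<noteq> y j)" using j by (rule LeastI)
    hence "m \<le> (LEAST j. x j \<noteq> y j)" using ag by (meson not_le)
    thus ?thesis using False assms by (simp add: dSig_def power_decreasing)
  qed (use assms in \<open>simp add: dSig_def\<close>)
qed

definition var_seq :: "(nat \<Rightarrow> nat \<Rightarrow> bool) \<Rightarrow> real \<Rightarrow> ((nat \<Rightarrow> nat) \<Rightarrow> real) \<Rightarrow> nat \<Rightarrow> real" where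
  "var_seq M lam A k = enn2real (Var_k M lam A k)"

definition var_tail :: "(nat \<Rightarrow> nat \<Rightarrow> bool) \<Rightarrow> real \<Rightarrow> ((nat \<Rightarrow> nat) \<Rightarrow> real) \<Rightarrow> nat \<Rightarrow> real" where
  "var_tail M lam A k = (\<Sum>j. var_seq M lam A (j + k))"

lemma var_seq_nonneg: "0 \<le> var_seq M lam A k"
  by (simp add: var_seq_def)

lemma Var_k_finite:
  assumes "Var M lam A < \<infinity>" "1 \<le> k"
  shows "Var_k M lam A k \<noteq> \<infinity>"
proof -
  obtain j where k: "k = Suc j" using assms(2) by (cases k) auto
  have "Var_k M lam A (Suc j) \<le> (\<Sum>i<Suc j. Var_k M lam A (Suc i))"
    by (simp add: add_increasing)
  also have "\<dots> \<le> Var M lam A"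
    unfolding Var_def by (rule sum_le_suminf) auto
  finally show ?thesis using assms(1) k by (auto simp: top_unique)
qed

lemma ennreal_var_seq:
  assumes "Var M lam A < \<infinity>" "1 \<le> k"
  shows "ennreal (var_seq M lam A k) = Var_k M lam A k"
  using Var_k_finite[OF assms] by (simp add: var_seq_def less_top)

lemma var_seq_bound:
  assumes "Var M lam A < \<infinity>" "1 \<le> k"
    and "x \<in> Sigma_M M" "y \<in> Sigma_M M" "dSig lam x y \<le> lam ^ k"
  shows "A x - A y \<le> var_seq M lam A k"
proof (cases "A x - A y \<le> 0")
  case True thus ?thesis using var_seq_nonneg order_trans by blast
next
  case False
  have "ennreal (A x - A y) \<le> Var_k M lam A k"
    unfolding Var_k_def using assms by (intro SUP_upper2[of "(x, y)"]) auto
  also have "\<dots> = ennreal (var_seq M lam A k)" using ennreal_var_seq[OF assms(1,2)] ..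
  finally show ?thesis using False var_seq_nonneg by (simp add: ennreal_le_iff)
qed

lemma var_seq_summable:
  assumes "Var M lam A < \<infinity>" "1 \<le> k"
  shows "summable (\<lambda>j. var_seq M lam A (j + k))"
proof -
  have "(\<Sum>j. ennreal (var_seq M lam A (Suc j))) = Var M lam A"
    unfolding Var_def using ennreal_var_seq[OF assms(1)] by simp
  hence "summable (\<lambda>j. var_seq M lam A (j + 1))"
    using assms(1) by (intro summable_suminf_not_top) (auto simp: var_seq_nonneg)
  from summable_ignore_initial_segment[OF this, of "k - 1"] show ?thesis
    using assms(2) by (simp add: add.assoc)
qed

lemma ennreal_var_tail:
  assumes "Var M lam A < \<infinity>" "1 \<le> k"
  shows "ennreal (var_tail M lam A k) = (\<Sum>j. Var_k M lam A (j + k))"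
proof -
  have "(\<Sum>j. ennreal (var_seq M lam A (j + k))) = ennreal (var_tail M lam A k)"
    unfolding var_tail_def
    by (rule suminf_ennreal2[OF var_seq_nonneg var_seq_summable[OF assms]])
  thus ?thesis using ennreal_var_seq[OF assms(1)] assms(2) by simp
qed

lemma var_tail_Suc_le:
  assumes "Var M lam A < \<infinity>" "1 \<le> k"
  shows "var_tail M lam A (Suc k) \<le> var_tail M lam A k"
  using suminf_split_head[OF var_seq_summable[OF assms]] var_seq_nonneg[of M lam A k]
  by (simp add: var_tail_def)

lemma var_tail_small:
  assumes "Var M lam A < \<infinity>" "0 < e"
  shows "\<exists>N\<ge>1. var_tail M lam A N < e"
proof -
  obtain N where N: "\<forall>n\<ge>N. norm (\<Sum>i. var_seq M lam A (i + n + 1)) < e"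
    using suminf_exist_split[OF assms(2) var_seq_summable[OF assms(1), of 1]] by auto
  have "var_tail M lam A (Suc N) = (\<Sum>i. var_seq M lam A (i + N + 1))"
    by (simp add: var_tail_def add.assoc)
  hence "var_tail M lam A (Suc N) < e" using N by auto
  thus ?thesis by (intro exI[of _ "Suc N"]) simp
qed

definition birkhoff_sum :: "((nat \<Rightarrow> nat) \<Rightarrow> real) \<Rightarrow> (nat \<Rightarrow> nat) \<Rightarrow> nat \<Rightarrow> real" where
  "birkhoff_sum A y n = (\<Sum>i<n. A ((shift ^^ i) y))"

lemma birkhoff_sum_Suc: "birkhoff_sum A y (Suc n) = birkhoff_sum A y n + A ((shift ^^ n) y)"
  by (simp add: birkhoff_sum_def)

lemma birkhoff_sum_distortion:
  assumes lam: "0 < lam" "lam < 1" and var: "Var M lam A < \<infinity>"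
    and y: "y \<in> Sigma_M M" "y' \<in> Sigma_M M" and ag: "\<forall>i<n + k. y i = y' i"
  shows "birkhoff_sum A y n - birkhoff_sum A y' n \<le> var_tail M lam A (Suc k)"
proof -
  have "birkhoff_sum A y n - birkhoff_sum A y' n
      = (\<Sum>i<n. A ((shift ^^ i) y) - A ((shift ^^ i) y'))"
    by (simp add: birkhoff_sum_def sum_subtractf)
  also have "\<dots> \<le> (\<Sum>i<n. var_seq M lam A (n + k - i))"
  proof (rule sum_mono)
    fix i assume i: "i \<in> {..<n}"
    have "dSig lam ((shift ^^ i) y) ((shift ^^ i) y') \<le> lam ^ (n + k - i)"
      using ag by (subst dSig_le_iff_agree[OF lam]) (auto simp: shift_funpow)
    thus "A ((shift ^^ i) y) - A ((shift ^^ i) y') \<le> var_seq M lam A (n + k - i)"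
      using i by (intro var_seq_bound var shiftn_Sigma y) auto
  qed
  also have "\<dots> = (\<Sum>j<n. var_seq M lam A (j + Suc k))"
  proof -
    have "(\<Sum>i<n. var_seq M lam A (n + k - i))
        = (\<Sum>i<n. (\<lambda>j. var_seq M lam A (j + Suc k)) (n - Suc i))"
      by (intro sum.cong refl) (simp add: Suc_diff_Suc)
    thus ?thesis using sum.nat_diff_reindex[of "\<lambda>j. var_seq M lam A (j + Suc k)" n] by simp
  qed
  also have "\<dots> \<le> var_tail M lam A (Suc k)"
    unfolding var_tail_def
    by (rule sum_le_suminf[OF var_seq_summable[OF var]]) (auto simp: var_seq_nonneg)
  finally show ?thesis .
qed


section \<open>Periodic orbit measures\<close>

lemma space_borel_Sig: "space (borel_Sig M lam) = Sigma_M M"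
  by (simp add: borel_Sig_def space_measure_of_conv)

lemma open_Sig_in_sets: "open_Sig M lam U \<Longrightarrow> U \<in> sets (borel_Sig M lam)"
  unfolding borel_Sig_def
  by (subst sets_measure_of) (auto simp: open_Sig_def intro: sigma_sets.Basic)

lemma cont_Sig_measurable:
  assumes f: "cont_Sig M lam f"
  shows "f \<in> borel_measurable (borel_Sig M lam)"
proof (rule borel_measurableI)
  fix S :: "real set" assume S: "open S"
  have "open_Sig M lam (f -` S \<inter> Sigma_M M)"
    unfolding open_Sig_def
  proof (intro conjI ballI)
    fix x assume x: "x \<in> f -` S \<inter> Sigma_M M"
    then obtain e where e: "e > 0" "\<forall>y. dist y (f x) < e \<longrightarrow> y \<in> S"
      using S open_dist by blast
    obtain d where d: "d > 0" "\<forall>y\<in>Sigma_M M. dSig lam x y < d \<longrightarrow> \<bar>f y - f x\<bar> < e"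
      using f x e(1) unfolding cont_Sig_def by blast
    show "\<exists>e>0. \<forall>y\<in>Sigma_M M. dSig lam x y < e \<longrightarrow> y \<in> f -` S \<inter> Sigma_M M"
      using d e by (intro exI[of _ d]) (auto simp: dist_real_def)
  qed auto
  thus "f -` S \<inter> space (borel_Sig M lam) \<in> sets (borel_Sig M lam)"
    by (simp add: space_borel_Sig open_Sig_in_sets)
qed

text \<open>The shift is continuous, hence Borel measurable.\<close>
lemma shift_measurable:
  assumes lam: "0 < lam" "lam < 1"
  shows "shift \<in> measurable (borel_Sig M lam) (borel_Sig M lam)"
proof -
  have "shift \<in> measurable (borel_Sig M lam) (sigma (Sigma_M M) {U. open_Sig M lam U})"
  proof (rule measurable_measure_of)
    show "{U. open_Sig M lam U} \<subseteq> Pow (Sigma_M M)" by (auto simp: open_Sig_def)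
    show "shift \<in> space (borel_Sig M lam) \<rightarrow> Sigma_M M"
      by (auto simp: space_borel_Sig shift_Sigma)
    fix U assume "U \<in> {U. open_Sig M lam U}"
    hence U: "open_Sig M lam U" by simp
    have "open_Sig M lam (shift -` U \<inter> Sigma_M M)"
      unfolding open_Sig_def
    proof (intro conjI ballI)
      fix x assume x: "x \<in> shift -` U \<inter> Sigma_M M"
      then obtain e where e: "e > 0" "\<forall>y\<in>Sigma_M M. dSig lam (shift x) y < e \<longrightarrow> y \<in> U"
        using U unfolding open_Sig_def by blast
      obtain m where m: "lam ^ m < e" using real_arch_pow_inv[OF e(1) lam(2)] by blast
      show "\<exists>e>0. \<forall>y\<in>Sigma_M M. dSig lam x y < e \<longrightarrow> y \<in> shift -` U \<inter> Sigma_M M"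
      proof (intro exI[of _ "lam ^ Suc m"] conjI ballI impI)
        show "0 < lam ^ Suc m" using lam by simp
        fix y assume y: "y \<in> Sigma_M M" "dSig lam x y < lam ^ Suc m"
        hence "\<forall>i<Suc m. x i = y i" using dSig_le_iff_agree[OF lam] by (meson less_imp_le)
        hence "dSig lam (shift x) (shift y) \<le> lam ^ m"
          by (subst dSig_le_iff_agree[OF lam]) (auto simp: shift_def)
        hence "shift y \<in> U" using e m y(1) shift_Sigma by fastforce
        thus "y \<in> shift -` U \<inter> Sigma_M M" using y by auto
      qed
    qed auto
    thus "shift -` U \<inter> space (borel_Sig M lam) \<in> sets (borel_Sig M lam)"
      by (simp add: space_borel_Sig open_Sig_in_sets)
  qed
  thus ?thesis by (simp add: borel_Sig_def)
qed

lemma funpow_mod_period: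
  assumes per: "(shift ^^ P) z = z"
  shows "(shift ^^ m) z = (shift ^^ (m mod P)) z"
proof -
  have "(shift ^^ (q * P + r)) z = (shift ^^ r) z" for q r
  proof (induction q)
    case (Suc q)
    have "Suc q * P + r = (q * P + r) + P" by simp
    hence "(shift ^^ (Suc q * P + r)) z = (shift ^^ (q * P + r)) ((shift ^^ P) z)"
      by (simp only: funpow_add comp_apply)
    thus ?case using Suc per by simp
  qed simp
  from this[of "m div P" "m mod P"] show ?thesis by simp
qed

text \<open>Along a periodic orbit of period P, the index map i \<mapsto> i + 1 mod P shows that the
  orbit visits a set B as often as it visits its preimage under the shift.\<close>
lemma periodic_visits_shift:
  assumes per: "(shift ^^ P) z = z" and P: "0 < P"
  shows "card {i\<in>{..<P}. (shift ^^ Suc i) z \<in> B} = card {i\<in>{..<P}. (shift ^^ i) z \<in> B}"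
proof -
  let ?g = "\<lambda>i. Suc i mod P"
  let ?L = "{i\<in>{..<P}. (shift ^^ Suc i) z \<in> B}"
  have "inj_on ?g {..<P}"
  proof (rule inj_onI)
    fix i j assume "i \<in> {..<P}" "j \<in> {..<P}" "Suc i mod P = Suc j mod P"
    thus "i = j" by (cases "Suc i = P"; cases "Suc j = P") auto
  qed
  hence inj: "inj_on ?g ?L" by (rule inj_on_subset) auto
  have "?g ` ?L = {i\<in>{..<P}. (shift ^^ i) z \<in> B}"
  proof
    show "?g ` ?L \<subseteq> {i\<in>{..<P}. (shift ^^ i) z \<in> B}"
      using funpow_mod_period[OF per] P by auto
    show "{i\<in>{..<P}. (shift ^^ i) z \<in> B} \<subseteq> ?g ` ?L"
    proof
      fix j assume j: "j \<in> {i\<in>{..<P}. (shift ^^ i) z \<in> B}"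
      show "j \<in> ?g ` ?L"
      proof (cases j)
        case 0
        have "Suc (P - 1) = P" using P by simp
        hence "(shift ^^ Suc (P - 1)) z = (shift ^^ P) z" by (simp only:)
        hence "?g (P - 1) = j" "(shift ^^ Suc (P - 1)) z \<in> B" using 0 j per P by auto
        thus ?thesis using P by (intro image_eqI[of _ _ "P - 1"]) (auto simp del: funpow.simps)
      next
        case (Suc k)
        thus ?thesis using j by (intro image_eqI[of _ _ k]) auto
      qed
    qed
  qed
  thus ?thesis using card_image[OF inj] by simp
qed

definition orbit_measure :: "(nat \<Rightarrow> nat \<Rightarrow> bool) \<Rightarrow> real \<Rightarrow> (nat \<Rightarrow> nat) \<Rightarrow> nat \<Rightarrow> (nat \<Rightarrow> nat) measure" where
  "orbit_measure M lam z P =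
     distr (uniform_count_measure {..<P}) (borel_Sig M lam) (\<lambda>i. (shift ^^ i) z)"

lemma orbit_map_measurable:
  assumes "z \<in> Sigma_M M"
  shows "(\<lambda>i. (shift ^^ i) z) \<in> measurable (uniform_count_measure {..<P}) (borel_Sig M lam)"
  using shiftn_Sigma[OF assms]
  by (subst measurable_cong_sets[OF sets_uniform_count_measure_count_space refl])
     (auto simp: space_borel_Sig)

lemma orbit_measure_invariant:
  assumes lam: "0 < lam" "lam < 1" and z: "z \<in> Sigma_M M"
    and P: "0 < P" and per: "(shift ^^ P) z = z"
  shows "orbit_measure M lam z P \<in> inv_measures M lam"
proof -
  let ?U = "uniform_count_measure {..<P}"
  let ?T = "\<lambda>i. (shift ^^ i) z"
  let ?\<mu> = "orbit_measure M lam z P"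
  note Tm = orbit_map_measurable[OF z]
  have sets\<mu>: "sets ?\<mu> = sets (borel_Sig M lam)" by (simp add: orbit_measure_def)
  have space\<mu>: "space ?\<mu> = Sigma_M M" by (simp add: orbit_measure_def space_borel_Sig)
  have sm: "shift \<in> measurable ?\<mu> ?\<mu>"
    using shift_measurable[OF lam] by (simp add: measurable_cong_sets[OF sets\<mu> sets\<mu>])
  show ?thesis
    unfolding inv_measures_def
  proof (intro CollectI conjI ballI)
    show "prob_space ?\<mu>" unfolding orbit_measure_def
      using P by (intro prob_space.prob_space_distr[OF prob_space_uniform_count_measure Tm]) auto
    fix B assume B: "B \<in> sets ?\<mu>"
    have pre: "shift -` B \<inter> Sigma_M M \<in> sets (borel_Sig M lam)"
      using measurable_sets[OF sm B] sets\<mu> by (simp add: space\<mu>)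
    have "emeasure ?\<mu> (shift -` B \<inter> space ?\<mu>) = emeasure ?U (?T -` (shift -` B \<inter> Sigma_M M) \<inter> {..<P})"
      unfolding space\<mu> unfolding orbit_measure_def using pre
      by (subst emeasure_distr[OF Tm]) (auto simp: space_uniform_count_measure)
    also have "?T -` (shift -` B \<inter> Sigma_M M) \<inter> {..<P} = {i\<in>{..<P}. (shift ^^ Suc i) z \<in> B}"
      using shiftn_Sigma[OF z] by (auto simp: funpow_swap1)
    also have "emeasure ?U \<dots> = emeasure ?U {i\<in>{..<P}. (shift ^^ i) z \<in> B}"
      using periodic_visits_shift[OF per P, of B]
      by (subst (1 2) emeasure_uniform_count_measure) (auto simp del: funpow.simps)
    also have "{i\<in>{..<P}. (shift ^^ i) z \<in> B} = ?T -` B \<inter> space ?U"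
      by (auto simp: space_uniform_count_measure)
    also have "emeasure ?U (?T -` B \<inter> space ?U) = emeasure ?\<mu> B"
      unfolding orbit_measure_def using B sets\<mu> by (subst emeasure_distr[OF Tm]) auto
    finally show "emeasure ?\<mu> (shift -` B \<inter> space ?\<mu>) = emeasure ?\<mu> B" .
  qed (use sets\<mu> sm in auto)
qed

lemma orbit_measure_nn_integral:
  assumes z: "z \<in> Sigma_M M" and f: "f \<in> borel_measurable (borel_Sig M lam)"
  shows "(\<integral>\<^sup>+ x. ennreal (f x) \<partial>orbit_measure M lam z P)
       = ennreal ((\<Sum>i<P. max 0 (f ((shift ^^ i) z))) / P)"
proof -
  have "(\<integral>\<^sup>+ x. ennreal (f x) \<partial>orbit_measure M lam z P)
      = (\<integral>\<^sup>+ i. ennreal (f ((shift ^^ i) z)) \<partial>uniform_count_measure {..<P})"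
    unfolding orbit_measure_def using f by (subst nn_integral_distr[OF orbit_map_measurable[OF z]]) auto
  also have "\<dots> = (\<Sum>i<P. ennreal (1 / card {..<P}) * ennreal (f ((shift ^^ i) z)))"
    unfolding uniform_count_measure_def by (subst nn_integral_point_measure_finite) auto
  also have "\<dots> = (\<Sum>i<P. ennreal (max 0 (f ((shift ^^ i) z)) / P))"
    by (intro sum.cong refl) (auto simp: ennreal_mult[symmetric] max_def ennreal_neg)
  also have "\<dots> = ennreal ((\<Sum>i<P. max 0 (f ((shift ^^ i) z))) / P)"
    by (subst sum_ennreal) (auto simp: sum_divide_distrib)
  finally show ?thesis .
qed

lemma orbit_measure_eintegral:
  assumes z: "z \<in> Sigma_M M" and contA: "cont_Sig M lam A"
  shows "eintegral (orbit_measure M lam z P) A = ereal (birkhoff_sum A z P / P)"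
proof -
  have Am: "A \<in> borel_measurable (borel_Sig M lam)" by (rule cont_Sig_measurable[OF contA])
  have "eintegral (orbit_measure M lam z P) A
      = ereal ((\<Sum>i<P. max 0 (A ((shift ^^ i) z))) / P)
        - ereal ((\<Sum>i<P. max 0 (- A ((shift ^^ i) z))) / P)"
    unfolding eintegral_def using Am
    by (simp add: orbit_measure_nn_integral[OF z] sum_nonneg borel_measurable_uminus)
  also have "(\<Sum>i<P. max 0 (A ((shift ^^ i) z)) - max 0 (- A ((shift ^^ i) z))) = birkhoff_sum A z P"
    unfolding birkhoff_sum_def by (intro sum.cong refl) (auto simp: max_def)
  hence "ereal ((\<Sum>i<P. max 0 (A ((shift ^^ i) z))) / P)
        - ereal ((\<Sum>i<P. max 0 (- A ((shift ^^ i) z))) / P) = ereal (birkhoff_sum A z P / P)"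
    by (simp add: diff_divide_distrib[symmetric] sum_subtractf[symmetric])
  finally show ?thesis .
qed

lemma periodic_average_le_beta:
  assumes lam: "0 < lam" "lam < 1" and contA: "cont_Sig M lam A"
    and z: "z \<in> Sigma_M M" and P: "0 < P" and per: "(shift ^^ P) z = z"
  shows "ereal (birkhoff_sum A z P / P) \<le> beta M lam A"
  unfolding beta_def orbit_measure_eintegral[OF z contA, symmetric]
  by (rule SUP_upper[OF orbit_measure_invariant[OF lam z P per]])

lemma periodic_sum_le:
  assumes lam: "0 < lam" "lam < 1" and contA: "cont_Sig M lam A" and b: "beta M lam A = ereal b"
    and z: "z \<in> Sigma_M M" and P: "0 < P" and per: "(shift ^^ P) z = z"
  shows "birkhoff_sum A z P \<le> real P * b"
proof -
  have "birkhoff_sum A z P / P \<le> b"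
    using periodic_average_le_beta[OF lam contA z P per] b by simp
  thus ?thesis using P by (simp add: divide_le_eq mult.commute)
qed


section \<open>Closing orbit segments through F\<close>

lemma Sigma_Bcore:
  assumes "x \<in> Sigma_M M" shows "x i \<in> Bcore M"
proof -
  have "\<forall>i. x i \<in> Bset M n" for n
  proof (induction n)
    case 0 thus ?case using assms by (auto simp: Bset_def Sigma_M_def)
  next
    case (Suc n)
    show ?case
    proof
      fix i
      have "M (x i) (x (Suc i))" using assms by (auto simp: Sigma_M_def)
      thus "x i \<in> Bset M (Suc n)" using Suc by (auto simp: Bset_def)
    qed
  qed
  thus ?thesis by (auto simp: Bcore_def)
qed

text \<open>An admissible word y_0 ... y_{n-1}, followed by a path of length K0 through F leading
  back to y_0, repeats to a periodic point of period n + K0.\<close>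
lemma periodic_closing:
  assumes y: "y \<in> Sigma_M M" and n: "1 \<le> n"
    and p0: "p 0 = y (n - 1)" and pK: "p (Suc K0) = y 0"
    and pF: "\<forall>m\<in>{1..K0}. p m \<in> F" and pM: "\<forall>m\<le>K0. M (p m) (p (Suc m))"
  shows "\<exists>z\<in>Sigma_M M. (shift ^^ (n + K0)) z = z \<and> (\<forall>i<n. z i = y i)
           \<and> (\<forall>i. n \<le> i \<and> i < n + K0 \<longrightarrow> z i \<in> F)"
proof -
  define P where "P = n + K0"
  define w where "w i = (if i < n then y i else p (i - n + 1))" for i
  define z where "z j = w (j mod P)" for j
  have P: "0 < P" using n by (simp add: P_def)
  have wP: "w P = w 0" using n pK by (simp add: w_def P_def)
  have wM: "M (w i) (w (Suc i))" if i: "i < P" for i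
  proof -
    consider "Suc i < n" | "Suc i = n" | "n \<le> i" by linarith
    thus ?thesis
    proof cases
      case 1 thus ?thesis using y by (simp add: w_def Sigma_M_def)
    next
      case 2
      hence "w i = p 0" "w (Suc i) = p 1" using p0 by (auto simp: w_def)
      thus ?thesis using pM by auto
    next
      case 3
      hence "w i = p (i - n + 1)" "w (Suc i) = p (Suc (i - n + 1))" "i - n + 1 \<le> K0"
        using i by (auto simp: w_def P_def Suc_diff_le)
      thus ?thesis using pM by auto
    qed
  qed
  have "z \<in> Sigma_M M"
    unfolding Sigma_M_def
  proof (intro CollectI allI)
    fix j
    have r: "j mod P < P" using P by simp
    show "M (z j) (z (Suc j))"
    proof (cases "Suc (j mod P) = P")
      case True
      hence "z (Suc j) = w P" using wP by (simp add: z_def mod_Suc)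
      thus ?thesis using wM[OF r] True by (simp add: z_def)
    next
      case False
      hence "z (Suc j) = w (Suc (j mod P))" by (simp add: z_def mod_Suc)
      thus ?thesis using wM[OF r] by (simp add: z_def)
    qed
  qed
  moreover have "(shift ^^ P) z = z" by (auto simp: shift_funpow z_def)
  moreover have "\<forall>i<n. z i = y i" by (auto simp: z_def w_def P_def)
  moreover have "\<forall>i. n \<le> i \<and> i < n + K0 \<longrightarrow> z i \<in> F"
    using pF by (auto simp: z_def w_def P_def)
  ultimately show ?thesis unfolding P_def by blast
qed

lemma primitive_closing:
  assumes "primitive_with M F"
  shows "\<exists>K0. \<forall>y\<in>Sigma_M M. \<forall>n\<ge>1. \<exists>z\<in>Sigma_M M. (shift ^^ (n + K0)) z = z
           \<and> (\<forall>i<n. z i = y i) \<and> (\<forall>i. n \<le> i \<and> i < n + K0 \<longrightarrow> z i \<in> F)"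
proof -
  obtain K0 where K0: "\<forall>i\<in>Bcore M. \<forall>j\<in>Bcore M.
     \<exists>p::nat \<Rightarrow> nat. p 0 = i \<and> p (Suc K0) = j \<and> (\<forall>m\<in>{1..K0}. p m \<in> F)
        \<and> (\<forall>m\<le>K0. M (p m) (p (Suc m)))"
    using assms unfolding primitive_with_def by blast
  have "\<exists>z\<in>Sigma_M M. (shift ^^ (n + K0)) z = z \<and> (\<forall>i<n. z i = y i)
           \<and> (\<forall>i. n \<le> i \<and> i < n + K0 \<longrightarrow> z i \<in> F)"
    if y: "y \<in> Sigma_M M" and n: "1 \<le> n" for y n
  proof -
    obtain p where "p 0 = y (n - 1)" "p (Suc K0) = y 0" "\<forall>m\<in>{1..K0}. p m \<in> F"
        "\<forall>m\<le>K0. M (p m) (p (Suc m))"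
      using K0 Sigma_Bcore[OF y] by blast
    thus ?thesis by (rule periodic_closing[OF y n])
  qed
  thus ?thesis by blast
qed

section \<open>Bounds coming from periodic orbits\<close>

text \<open>On a nonempty primitive subshift there are periodic orbits, so \<beta>_A > -\<infinity>.\<close>
lemma beta_not_minf:
  assumes lam: "0 < lam" "lam < 1" and prim: "primitive_with M F" and contA: "cont_Sig M lam A"
    and ne: "Sigma_M M \<noteq> {}"
  shows "beta M lam A \<noteq> -\<infinity>"
proof -
  obtain K0 y where y: "y \<in> Sigma_M M" and K0: "\<forall>n\<ge>1. \<exists>z\<in>Sigma_M M. (shift ^^ (n + K0)) z = z
           \<and> (\<forall>i<n. z i = y i) \<and> (\<forall>i. n \<le> i \<and> i < n + K0 \<longrightarrow> z i \<in> F)"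
    using primitive_closing[OF prim] ne by blast
  obtain z where z: "z \<in> Sigma_M M" "(shift ^^ (1 + K0)) z = z" using K0 by blast
  have "ereal (birkhoff_sum A z (1 + K0) / real (1 + K0)) \<le> beta M lam A"
    by (rule periodic_average_le_beta[OF lam contA z(1) _ z(2)]) simp
  thus ?thesis by auto
qed

text \<open>Close the
  segment y_0 ... y_{n-1} to a periodic point z; the Birkhoff sums of y and z differ by at
  most Var A, the closing part of z contributes at least K0 inf A|_F, and the full periodic
  sum of z is at most (n + K0) \<beta>_A.\<close>
lemma birkhoff_excess_bounded:
  assumes lam: "0 < lam" "lam < 1" and prim: "primitive_with M F" and contA: "cont_Sig M lam A"
    and var: "Var M lam A < \<infinity>" and cF: "\<forall>x\<in>Sigma_M M. x 0 \<in> F \<longrightarrow> cF \<le> A x"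
    and b: "beta M lam A = ereal b"
  shows "\<exists>C. \<forall>y\<in>Sigma_M M. \<forall>n\<ge>1. birkhoff_sum A y n - real n * b \<le> C"
proof -
  obtain K0 where K0: "\<forall>y\<in>Sigma_M M. \<forall>n\<ge>1. \<exists>z\<in>Sigma_M M. (shift ^^ (n + K0)) z = z
           \<and> (\<forall>i<n. z i = y i) \<and> (\<forall>i. n \<le> i \<and> i < n + K0 \<longrightarrow> z i \<in> F)"
    using primitive_closing[OF prim] by blast
  have "birkhoff_sum A y n - real n * b \<le> real K0 * (b - cF) + var_tail M lam A 1"
    if y: "y \<in> Sigma_M M" and n: "1 \<le> n" for y n
  proof -
    obtain z where z: "z \<in> Sigma_M M" "(shift ^^ (n + K0)) z = z" "\<forall>i<n. z i = y i"
      "\<forall>i. n \<le> i \<and> i < n + K0 \<longrightarrow> z i \<in> F" using K0 y n by blast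
    have periodic: "birkhoff_sum A z (n + K0) \<le> real (n + K0) * b"
      using n by (intro periodic_sum_le[OF lam contA b z(1) _ z(2)]) simp
    have split: "birkhoff_sum A z (n + K0) = birkhoff_sum A z n + (\<Sum>i\<in>{n..<n + K0}. A ((shift ^^ i) z))"
      unfolding birkhoff_sum_def
      by (subst sum.atLeastLessThan_concat[of 0 n "n + K0", symmetric, simplified atLeast0LessThan]) auto
    have "real (card {n..<n + K0}) * cF \<le> (\<Sum>i\<in>{n..<n + K0}. A ((shift ^^ i) z))"
    proof (rule sum_bounded_below)
      fix i assume "i \<in> {n..<n + K0}"
      hence "((shift ^^ i) z) 0 \<in> F" using z(4) by (simp add: shift_funpow)
      thus "cF \<le> A ((shift ^^ i) z)" using cF shiftn_Sigma[OF z(1)] by blast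
    qed
    hence closing: "real K0 * cF \<le> (\<Sum>i\<in>{n..<n + K0}. A ((shift ^^ i) z))" by simp
    have "birkhoff_sum A y n - birkhoff_sum A z n \<le> var_tail M lam A (Suc 0)"
      using z(3) by (intro birkhoff_sum_distortion[OF lam var y z(1)]) simp
    thus ?thesis using periodic split closing by (simp add: algebra_simps)
  qed
  thus ?thesis by blast
qed


section \<open>The minimal sub-action\<close>

definition excess_set :: "(nat \<Rightarrow> nat \<Rightarrow> bool) \<Rightarrow> ((nat \<Rightarrow> nat) \<Rightarrow> real) \<Rightarrow> real \<Rightarrow> (nat \<Rightarrow> nat) \<Rightarrow> real set" where
  "excess_set M A b x = insert 0
     {birkhoff_sum A y n - real n * b | y n. y \<in> Sigma_M M \<and> 1 \<le> n \<and> (shift ^^ n) y = x}"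

definition min_subaction :: "(nat \<Rightarrow> nat \<Rightarrow> bool) \<Rightarrow> ((nat \<Rightarrow> nat) \<Rightarrow> real) \<Rightarrow> real \<Rightarrow> (nat \<Rightarrow> nat) \<Rightarrow> real" where
  "min_subaction M A b x = Sup (excess_set M A b x)"

lemma min_subaction_least:
  assumes "0 \<le> t"
    and "\<And>y n. y \<in> Sigma_M M \<Longrightarrow> 1 \<le> n \<Longrightarrow> (shift ^^ n) y = x \<Longrightarrow> birkhoff_sum A y n - real n * b \<le> t"
  shows "min_subaction M A b x \<le> t"
  unfolding min_subaction_def using assms by (intro cSup_least) (auto simp: excess_set_def)

lemma min_subaction_upper:
  assumes bnd: "\<forall>y\<in>Sigma_M M. \<forall>n\<ge>1. birkhoff_sum A y n - real n * b \<le> C"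
    and s: "s \<in> excess_set M A b x"
  shows "s \<le> min_subaction M A b x"
proof -
  have "bdd_above (excess_set M A b x)"
    using bnd by (intro bdd_aboveI[of _ "max 0 C"]) (auto simp: excess_set_def intro: max.coboundedI2)
  thus ?thesis unfolding min_subaction_def using s by (rule cSup_upper[rotated])
qed

lemma min_subaction_nonneg:
  assumes "\<forall>y\<in>Sigma_M M. \<forall>n\<ge>1. birkhoff_sum A y n - real n * b \<le> C"
  shows "0 \<le> min_subaction M A b x"
  using assms by (rule min_subaction_upper) (simp add: excess_set_def)

lemma min_subaction_bounded:
  assumes "\<forall>y\<in>Sigma_M M. \<forall>n\<ge>1. birkhoff_sum A y n - real n * b \<le> C"
  shows "min_subaction M A b x \<le> max 0 C"
  using assms by (intro min_subaction_least) (auto intro: max.coboundedI2)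

text \<open>The candidate satisfies A + u - u \<circ> \<sigma> \<le> b: extending a preimage y of x by one step
  gives a preimage of \<sigma> x whose excess is larger by A x - b (for the excess 0, use y = x).\<close>
lemma min_subaction_subaction:
  assumes bnd: "\<forall>y\<in>Sigma_M M. \<forall>n\<ge>1. birkhoff_sum A y n - real n * b \<le> C"
    and x: "x \<in> Sigma_M M"
  shows "A x + min_subaction M A b x - min_subaction M A b (shift x) \<le> b"
proof -
  let ?u = "min_subaction M A b"
  have "birkhoff_sum A y n - real n * b \<le> ?u (shift x) - A x + b"
    if y: "y \<in> Sigma_M M" "1 \<le> n" "(shift ^^ n) y = x" for y n
  proof -
    have "birkhoff_sum A y (Suc n) - real (Suc n) * b \<in> excess_set M A b (shift x)"
      unfolding excess_set_def using y by (intro insertI2 CollectI exI[of _ y] exI[of _ "Suc n"]) auto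
    hence "birkhoff_sum A y (Suc n) - real (Suc n) * b \<le> ?u (shift x)"
      by (rule min_subaction_upper[OF bnd])
    thus ?thesis using y by (simp add: birkhoff_sum_Suc algebra_simps)
  qed
  moreover have "0 \<le> ?u (shift x) - A x + b"
  proof -
    have "birkhoff_sum A x 1 - real 1 * b \<in> excess_set M A b (shift x)"
      unfolding excess_set_def using x by force
    hence "A x - b \<le> ?u (shift x)"
      using min_subaction_upper[OF bnd] by (simp add: birkhoff_sum_def)
    thus ?thesis by simp
  qed
  ultimately have "?u x \<le> ?u (shift x) - A x + b" by (intro min_subaction_least)
  thus ?thesis by simp
qed

lemma subaction_birkhoff:
  assumes sub: "\<forall>y\<in>Sigma_M M. A y + u y - u (shift y) \<le> b" and y: "y \<in> Sigma_M M"
  shows "birkhoff_sum A y n - real n * b + u y \<le> u ((shift ^^ n) y)"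
proof (induction n)
  case 0 thus ?case by (simp add: birkhoff_sum_def)
next
  case (Suc n)
  have "birkhoff_sum A y (Suc n) - real (Suc n) * b + u y
      = (birkhoff_sum A y n - real n * b + u y) + A ((shift ^^ n) y) - b"
    by (simp add: birkhoff_sum_Suc algebra_simps)
  also have "\<dots> \<le> u ((shift ^^ n) y) + A ((shift ^^ n) y) - b" using Suc by simp
  also have "\<dots> \<le> u (shift ((shift ^^ n) y))" using sub shiftn_Sigma[OF y, of n] by fastforce
  finally show ?case by simp
qed

lemma min_subaction_minimal:
  assumes sub: "\<forall>y\<in>Sigma_M M. A y + u y - u (shift y) \<le> b"
    and nonneg: "\<forall>y\<in>Sigma_M M. 0 \<le> u y" and x: "x \<in> Sigma_M M"
  shows "min_subaction M A b x \<le> u x"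
proof (rule min_subaction_least)
  show "0 \<le> u x" using nonneg x by blast
  fix y n assume y: "y \<in> Sigma_M M" and "1 \<le> n" and yx: "(shift ^^ n) y = x"
  show "birkhoff_sum A y n - real n * b \<le> u x"
    using subaction_birkhoff[OF sub y, of n] nonneg y yx by fastforce
qed

lemma glue_preimage:
  assumes y: "y \<in> Sigma_M M" and x': "x' \<in> Sigma_M M" and yx: "(shift ^^ n) y = x"
    and k: "1 \<le> k" and ag: "\<forall>i<k. x i = x' i"
  shows "\<exists>y'\<in>Sigma_M M. (shift ^^ n) y' = x' \<and> (\<forall>i<n + k. y i = y' i)"
proof -
  have yx': "y (j + n) = x j" for j using yx by (metis shift_funpow)
  define y' where "y' j = (if j < n then y j else x' (j - n))" for j
  have "y' \<in> Sigma_M M"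
    unfolding Sigma_M_def
  proof (intro CollectI allI)
    fix j
    consider "Suc j < n" | "Suc j = n" | "n \<le> j" by linarith
    thus "M (y' j) (y' (Suc j))"
    proof cases
      case 1 thus ?thesis using y by (simp add: y'_def Sigma_M_def)
    next
      case 2
      have "y n = x' 0" using yx'[of 0] ag k by simp
      hence "y' (Suc j) = y (Suc j)" "y' j = y j" using 2 by (auto simp: y'_def)
      thus ?thesis using y by (simp add: Sigma_M_def)
    next
      case 3
      hence "y' j = x' (j - n)" "y' (Suc j) = x' (Suc (j - n))" by (auto simp: y'_def Suc_diff_le)
      thus ?thesis using x' by (simp add: Sigma_M_def)
    qed
  qed
  moreover have "(shift ^^ n) y' = x'" by (auto simp: shift_funpow y'_def)
  moreover have "y i = y' i" if "i < n + k" for i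
  proof (cases "i < n")
    case False
    hence "y i = x (i - n)" using yx'[of "i - n"] by simp
    thus ?thesis using ag that False by (simp add: y'_def)
  qed (simp add: y'_def)
  ultimately show ?thesis by blast
qed

lemma min_subaction_oscillation:
  assumes lam: "0 < lam" "lam < 1" and var: "Var M lam A < \<infinity>"
    and bnd: "\<forall>y\<in>Sigma_M M. \<forall>n\<ge>1. birkhoff_sum A y n - real n * b \<le> C"
    and k: "1 \<le> k" and x: "x' \<in> Sigma_M M" and ag: "\<forall>i<k. x i = x' i"
  shows "min_subaction M A b x \<le> min_subaction M A b x' + var_tail M lam A k"
proof (rule min_subaction_least)
  have "0 \<le> var_tail M lam A k"
    unfolding var_tail_def by (intro suminf_nonneg var_seq_summable[OF var k] var_seq_nonneg)
  thus "0 \<le> min_subaction M A b x' + var_tail M lam A k"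
    using min_subaction_nonneg[OF bnd] by (simp add: add_nonneg_nonneg)
  fix y n assume y: "y \<in> Sigma_M M" and n: "1 \<le> n" and yx: "(shift ^^ n) y = x"
  obtain y' where y': "y' \<in> Sigma_M M" "(shift ^^ n) y' = x'" "\<forall>i<n + k. y i = y' i"
    using glue_preimage[OF y x yx k ag] by blast
  have "birkhoff_sum A y n - birkhoff_sum A y' n \<le> var_tail M lam A (Suc k)"
    by (rule birkhoff_sum_distortion[OF lam var y y'(1,3)])
  also have "\<dots> \<le> var_tail M lam A k" by (rule var_tail_Suc_le[OF var k])
  finally have "birkhoff_sum A y n - birkhoff_sum A y' n \<le> var_tail M lam A k" .
  moreover have "birkhoff_sum A y' n - real n * b \<le> min_subaction M A b x'"
    using y' n by (intro min_subaction_upper[OF bnd]) (auto simp: excess_set_def)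
  ultimately show "birkhoff_sum A y n - real n * b \<le> min_subaction M A b x' + var_tail M lam A k"
    by simp
qed

lemma min_subaction_Var_k:
  assumes lam: "0 < lam" "lam < 1" and var: "Var M lam A < \<infinity>"
    and bnd: "\<forall>y\<in>Sigma_M M. \<forall>n\<ge>1. birkhoff_sum A y n - real n * b \<le> C" and k: "1 \<le> k"
  shows "Var_k M lam (min_subaction M A b) k \<le> (\<Sum>j. Var_k M lam A (j + k))"
proof -
  have "Var_k M lam (min_subaction M A b) k \<le> ennreal (var_tail M lam A k)"
    unfolding Var_k_def
  proof (rule SUP_least)
    fix p assume "p \<in> {(x, y). x \<in> Sigma_M M \<and> y \<in> Sigma_M M \<and> dSig lam x y \<le> lam ^ k}"
    then obtain x x' where p: "p = (x, x')" "x' \<in> Sigma_M M" "dSig lam x x' \<le> lam ^ k" by auto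
    hence "min_subaction M A b x \<le> min_subaction M A b x' + var_tail M lam A k"
      using dSig_le_iff_agree[OF lam] by (intro min_subaction_oscillation[OF lam var bnd k]) auto
    thus "ennreal (min_subaction M A b (fst p) - min_subaction M A b (snd p))
        \<le> ennreal (var_tail M lam A k)"
      using p(1) by (intro ennreal_leI) simp
  qed
  thus ?thesis using ennreal_var_tail[OF var k] by simp
qed

lemma min_subaction_ucont:
  assumes lam: "0 < lam" "lam < 1" and var: "Var M lam A < \<infinity>"
    and bnd: "\<forall>y\<in>Sigma_M M. \<forall>n\<ge>1. birkhoff_sum A y n - real n * b \<le> C"
  shows "ucont_Sig M lam (min_subaction M A b)"
  unfolding ucont_Sig_def
proof (intro allI impI)
  fix e :: real assume "0 < e"
  then obtain N where N: "1 \<le> N" "var_tail M lam A N < e" using var_tail_small[OF var] by blast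
  show "\<exists>\<delta>>0. \<forall>x\<in>Sigma_M M. \<forall>y\<in>Sigma_M M. dSig lam x y < \<delta> \<longrightarrow>
      \<bar>min_subaction M A b y - min_subaction M A b x\<bar> < e"
  proof (intro exI[of _ "lam ^ N"] conjI ballI impI)
    show "0 < lam ^ N" using lam by simp
    fix x y assume xy: "x \<in> Sigma_M M" "y \<in> Sigma_M M" "dSig lam x y < lam ^ N"
    hence ag: "\<forall>i<N. x i = y i" using dSig_le_iff_agree[OF lam] by (meson less_imp_le)
    have "min_subaction M A b x \<le> min_subaction M A b y + var_tail M lam A N"
      using ag by (intro min_subaction_oscillation[OF lam var bnd N(1) xy(2)])
    moreover have "min_subaction M A b y \<le> min_subaction M A b x + var_tail M lam A N"
      using ag by (intro min_subaction_oscillation[OF lam var bnd N(1) xy(1)]) simp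
    ultimately show "\<bar>min_subaction M A b y - min_subaction M A b x\<bar> < e" using N(2) by simp
  qed
qed


text \<open>If \<Sigma> is empty or \<beta>_A = \<infinity>, the zero function has all the required properties.
  Otherwise \<beta>_A is a real number b, the excesses are bounded, and the minimal sub-action
  built from b does the job.\<close>
theorem mainTheorem6:
  fixes M :: "nat \<Rightarrow> nat \<Rightarrow> bool" and F :: "nat set" and lam :: real
    and A :: "(nat \<Rightarrow> nat) \<Rightarrow> real"
  assumes lam: "0 < lam" "lam < 1"
    and prim: "primitive_with M F"
    and contA: "cont_Sig M lam A"
    and bdd_above: "\<exists>c. \<forall>x\<in>Sigma_M M. A x \<le> c"
    and var: "Var M lam A < \<infinity>"
    and infF: "\<exists>c. \<forall>x\<in>Sigma_M M. x 0 \<in> F \<longrightarrow> c \<le> A x"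
  shows "\<exists>uA :: (nat \<Rightarrow> nat) \<Rightarrow> real.
      (\<forall>x\<in>Sigma_M M. 0 \<le> uA x)
    \<and> (\<exists>C. \<forall>x\<in>Sigma_M M. uA x \<le> C)
    \<and> ucont_Sig M lam uA
    \<and> (\<forall>x\<in>Sigma_M M. ereal (A x + uA x - uA (shift x)) \<le> beta M lam A)
    \<and> (\<forall>u. sub_action M lam A u \<and> (\<forall>x\<in>Sigma_M M. 0 \<le> u x) \<longrightarrow>
           (\<forall>x\<in>Sigma_M M. uA x \<le> u x))
    \<and> (\<forall>k\<ge>1. Var_k M lam uA k \<le> (\<Sum>j. Var_k M lam A (j + k)))"
proof (cases "Sigma_M M = {} \<or> beta M lam A = \<infinity>")
  case True
  have "Var_k M lam (\<lambda>_. 0) k \<le> X" for k X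
    unfolding Var_k_def by (rule SUP_least) simp
  thus ?thesis
    using True by (intro exI[of _ "\<lambda>_. 0"]) (auto simp: ucont_Sig_def intro: exI[of _ 1])
next
  case False
  obtain cF where cF: "\<forall>x\<in>Sigma_M M. x 0 \<in> F \<longrightarrow> cF \<le> A x" using infF by blast
  obtain b where b: "beta M lam A = ereal b"
    using False beta_not_minf[OF lam prim contA] by (cases "beta M lam A") auto
  obtain C where bnd: "\<forall>y\<in>Sigma_M M. \<forall>n\<ge>1. birkhoff_sum A y n - real n * b \<le> C"
    using birkhoff_excess_bounded[OF lam prim contA var cF b] by blast
  have sub: "\<forall>y\<in>Sigma_M M. A y + u y - u (shift y) \<le> b" if "sub_action M lam A u" for u
    using that b unfolding sub_action_def by auto
  show ?thesis
  proof (intro exI[of _ "min_subaction M A b"] conjI allI impI ballI exI[of _ "max 0 C"])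
    show "ucont_Sig M lam (min_subaction M A b)" by (rule min_subaction_ucont[OF lam var bnd])
  next
    fix x assume "x \<in> Sigma_M M"
    thus "ereal (A x + min_subaction M A b x - min_subaction M A b (shift x)) \<le> beta M lam A"
      using min_subaction_subaction[OF bnd] b by simp
  next
    fix u x assume "sub_action M lam A u \<and> (\<forall>x\<in>Sigma_M M. 0 \<le> u x)" "x \<in> Sigma_M M"
    thus "min_subaction M A b x \<le> u x" using min_subaction_minimal sub by blast
  qed (use min_subaction_nonneg[OF bnd] min_subaction_bounded[OF bnd]
         min_subaction_Var_k[OF lam var bnd] in auto)
qed

end
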